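(* For every positive integer $n$, $|\mathrm{Sort}_n(\mathrm{SC}_{3\underline{21}})|=2^{n-1}$.
   Context: $\mathfrak S_n$ is the set of permutations of $\{1,\dots,n\}$. A vincular pattern is a permutation with some entries underlined; a sequence contains it if it has a subsequence with the same relative order in which entries corresponding to adjacent underlined entries occupy consecutive positions. An occurrence of $3\underline{21}$ is $a_i a_j a_{j+1}$ with $i<j$ and $a_{j+1}<a_j<a_i$. For a pattern $\sigma$, the map $\mathrm{SC}_\sigma$ acts on $\tau$: read entries left to right; when the next entry $x$ is read, if pushing $x$ yields a stack whose entries read top to bottom (stack adjacency = consecutive positions) avoid $\sigma$, push $x$; otherwise pop the top stack entry to the output and repeat. At the end pop all remaining entries; the output is $\mathrm{SC}_\sigma(\tau)$. West's stack-sorting map is $s=\mathrm{SC}_{21}$. $\mathrm{Sort}_n(\mathrm{SC}_\sigma)=\{\tau\in\mathfrak S_n : s(\mathrm{SC}_\sigma(\tau))=12\cdots n\}$. *)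

theory Defs
  imports "HOL-Combinatorics.Multiset_Permutations"
begin

text \<open>A vincular pattern is a pair (p, U): p is the pattern as a list of numbers,
  and U is the set of (0-based) indices i such that entries i and i+1 of the pattern
  are adjacent underlined entries, i.e. must occupy consecutive positions.\<close>

type_synonym vpattern = "nat list \<times> nat set"

definition contains_vpat :: "nat list \<Rightarrow> vpattern \<Rightarrow> bool" where
  "contains_vpat w P \<longleftrightarrow>
     (\<exists>idx :: nat list.
        length idx = length (fst P) \<and>
        sorted_wrt (<) idx \<and>
        (\<forall>i\<in>set idx. i < length w) \<and>
        (\<forall>i<length idx. \<forall>j<length idx.
            (w ! (idx ! i) < w ! (idx ! j)) \<longleftrightarrow> (fst P ! i < fst P ! j)) \<and>
        (\<forall>i\<in>snd P. Suc i < length idx \<longrightarrow> idx ! Suc i = Suc (idx ! i)))"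

definition avoids_vpat :: "nat list \<Rightarrow> vpattern \<Rightarrow> bool" where
  "avoids_vpat w P \<longleftrightarrow> \<not> contains_vpat w P"

text \<open>The stack is a list whose head is the top,
  so the list itself reads the stack from top to bottom. If the stack is empty the entry is pushed (a one-entry stack avoids
  every pattern of length at least 2).\<close>

function sc_aux :: "vpattern \<Rightarrow> nat list \<Rightarrow> nat list \<Rightarrow> nat list" where
  "sc_aux P [] st = st"
| "sc_aux P (x # xs) st =
     (if avoids_vpat (x # st) P then sc_aux P xs (x # st)
      else (case st of [] \<Rightarrow> sc_aux P xs [x]
                     | y # st' \<Rightarrow> y # sc_aux P (x # xs) st'))"
  by pat_completeness auto
termination
  by (relation "measure (\<lambda>(P, xs, st). 2 * length xs + length st)") auto

definition SC :: "vpattern \<Rightarrow> nat list \<Rightarrow> nat list" where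
  "SC P \<tau> = sc_aux P \<tau> []"

definition west_s :: "nat list \<Rightarrow> nat list" where
  "west_s = SC ([2, 1], {})"

definition pat_3_21 :: vpattern where
  "pat_3_21 = ([3, 2, 1], {1})"

definition Sort_n :: "nat \<Rightarrow> vpattern \<Rightarrow> nat list set" where
  "Sort_n n P = {\<tau> \<in> permutations_of_set {1..n}. west_s (SC P \<tau>) = [1..<n+1]}"

end

theory Submission
  imports Defs "HOL-Library.Sublist"
begin

text \<open>
  While the stack, read from top to bottom, avoids 3\underline{21}, the map SC only pushes; so
  SC(\<tau>) = rev \<tau> when rev \<tau> avoids 3\underline{21}. Otherwise, at the first entry x that cannot
  be pushed the stack contains two adjacent entries p above d with d < p < x: everything down to p
  is popped and x lands directly on d, so the output contains p \<dots> x \<dots> d, a copy of 231.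
  West's map sorts exactly the 231-avoiding permutations, because s(L n R) = s(L) s(R) n for the
  maximum n. Hence \<tau> is sorted by s \<circ> SC iff rev \<tau> avoids 3\underline{21} and 231, i.e. iff \<tau>
  avoids \underline{12}3 and 132; in the presence of 132-avoidance, \underline{12}3-avoidance is the
  same as 123-avoidance. A permutation avoiding 123 and 132 starts with its largest or second
  largest entry, followed by any permutation of the rest avoiding 123 and 132, which gives
  2^(n-1).
\<close>

section \<open>Patterns\<close>

lemma subseq_rev: "subseq xs ys \<Longrightarrow> subseq (rev xs) (rev ys)"
  by (induction rule: list_emb.induct) (auto intro: subseq_rev_drop_many)

lemma subseq_rev_iff: "subseq (rev xs) (rev ys) \<longleftrightarrow> subseq xs ys"
  using subseq_rev[of "rev xs" "rev ys"] subseq_rev[of xs ys] by auto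

lemma subseq_pair_cases:
  assumes "b \<in> set t" "c \<in> set t" "b \<noteq> c"
  shows "subseq [b, c] t \<or> subseq [c, b] t"
  using assms by (induction t) (auto simp: subseq_singleton_left)

lemma set_subseq: "subseq xs ys \<Longrightarrow> set xs \<subseteq> set ys"
  by (auto elim: list_emb_set)

lemma subseq_Cons_Cons_iff: "subseq (a # xs) (x # t) \<longleftrightarrow> a = x \<and> subseq xs t \<or> subseq (a # xs) t"
  by (auto dest: subseq_Cons')

definition contains_3_21 :: "'a::linorder list \<Rightarrow> bool" where
  "contains_3_21 w \<longleftrightarrow> (\<exists>u a v b c z. w = u @ a # v @ b # c # z \<and> c < b \<and> b < a)"

definition contains_123 :: "'a::linorder list \<Rightarrow> bool" where
  "contains_123 w \<longleftrightarrow> (\<exists>a b c. subseq [a, b, c] w \<and> a < b \<and> b < c)"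

definition contains_132 :: "'a::linorder list \<Rightarrow> bool" where
  "contains_132 w \<longleftrightarrow> (\<exists>a b c. subseq [a, c, b] w \<and> a < b \<and> b < c)"

definition contains_231 :: "'a::linorder list \<Rightarrow> bool" where
  "contains_231 w \<longleftrightarrow> (\<exists>a b c. subseq [b, c, a] w \<and> a < b \<and> b < c)"

lemma contains_3_21_iff_nth:
  "contains_3_21 w \<longleftrightarrow> (\<exists>i j. i < j \<and> Suc j < length w \<and> w ! Suc j < w ! j \<and> w ! j < w ! i)"
proof
  assume "contains_3_21 w"
  then obtain u a v b c z where "w = u @ a # v @ b # c # z" "c < b" "b < a"
    unfolding contains_3_21_def by blast
  then show "\<exists>i j. i < j \<and> Suc j < length w \<and> w ! Suc j < w ! j \<and> w ! j < w ! i"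
    by (intro exI[of _ "length u"] exI[of _ "length u + Suc (length v)"]) (simp add: nth_append)
next
  assume "\<exists>i j. i < j \<and> Suc j < length w \<and> w ! Suc j < w ! j \<and> w ! j < w ! i"
  then obtain i j where ij: "i < j" "Suc j < length w" "w ! Suc j < w ! j" "w ! j < w ! i"
    by blast
  have "w = take i w @ w ! i # take (j - Suc i) (drop (Suc i) w) @ w ! j # w ! Suc j # drop (Suc (Suc j)) w"
  proof -
    have "drop (Suc i) w = take (j - Suc i) (drop (Suc i) w) @ drop j w"
      using ij by (metis Suc_leI append_take_drop_id drop_drop le_add_diff_inverse2)
    moreover have "drop j w = w ! j # w ! Suc j # drop (Suc (Suc j)) w"
      using ij by (metis Cons_nth_drop_Suc Suc_lessD)
    moreover have "w = take i w @ w ! i # drop (Suc i) w"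
      using ij by (simp add: Cons_nth_drop_Suc)
    ultimately show ?thesis
      by simp
  qed
  then show "contains_3_21 w"
    unfolding contains_3_21_def using ij by blast
qed

lemma contains_vpat_3_21_iff: "contains_vpat w pat_3_21 \<longleftrightarrow> contains_3_21 w"
proof
  assume "contains_vpat w pat_3_21"
  then obtain idx where len: "length idx = 3" and inc: "sorted_wrt (<) idx"
    and bound: "\<forall>i\<in>set idx. i < length w"
    and ord: "\<forall>i<3. \<forall>j<3. (w ! (idx ! i) < w ! (idx ! j)) \<longleftrightarrow> ([3, 2, 1::nat] ! i < [3, 2, 1] ! j)"
    and adj: "idx ! 2 = Suc (idx ! 1)"
    unfolding contains_vpat_def pat_3_21_def by (auto simp: numeral_eq_Suc)
  obtain i j k where idx: "idx = [i, j, k]"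
    using len by (auto simp: length_Suc_conv numeral_3_eq_3)
  have "w ! j < w ! i" "w ! k < w ! j"
    using ord[rule_format, of 1 0] ord[rule_format, of 2 1] by (simp_all add: idx)
  then show "contains_3_21 w"
    unfolding contains_3_21_iff_nth using inc bound adj idx by auto
next
  assume "contains_3_21 w"
  then obtain i j where ij: "i < j" "Suc j < length w" "w ! Suc j < w ! j" "w ! j < w ! i"
    unfolding contains_3_21_iff_nth by blast
  have "(w ! ([i, j, Suc j] ! a) < w ! ([i, j, Suc j] ! b)) \<longleftrightarrow> ([3, 2, 1::nat] ! a < [3, 2, 1] ! b)"
    if "a < 3" "b < 3" for a b
    using that ij by (auto simp: less_Suc_eq numeral_3_eq_3)
  then show "contains_vpat w pat_3_21"
    unfolding contains_vpat_def pat_3_21_def using ij by (intro exI[of _ "[i, j, Suc j]"]) auto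
qed

definition pat_21 :: vpattern where
  "pat_21 = ([2, 1], {})"

lemma west_s_eq_SC_pat_21: "west_s = SC pat_21"
  by (simp add: west_s_def pat_21_def)

lemma contains_vpat_21_iff: "contains_vpat w pat_21 \<longleftrightarrow> \<not> sorted w"
proof
  assume "contains_vpat w pat_21"
  then obtain idx where len: "length idx = 2" and inc: "sorted_wrt (<) idx"
    and bound: "\<forall>i\<in>set idx. i < length w"
    and ord: "\<forall>i<2. \<forall>j<2. (w ! (idx ! i) < w ! (idx ! j)) \<longleftrightarrow> ([2, 1::nat] ! i < [2, 1] ! j)"
    unfolding contains_vpat_def pat_21_def by (auto simp: numeral_eq_Suc)
  obtain i j where idx: "idx = [i, j]"
    using len by (auto simp: length_Suc_conv numeral_2_eq_2)
  have "w ! j < w ! i"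
    using ord[rule_format, of 1 0] by (simp add: idx)
  then show "\<not> sorted w"
    unfolding sorted_iff_nth_mono_less using inc bound idx by (auto simp: not_le)
next
  assume "\<not> sorted w"
  then obtain i j where ij: "i < j" "j < length w" "w ! j < w ! i"
    unfolding sorted_iff_nth_mono_less by (meson not_le)
  have "(w ! ([i, j] ! a) < w ! ([i, j] ! b)) \<longleftrightarrow> ([2, 1::nat] ! a < [2, 1] ! b)"
    if "a < 2" "b < 2" for a b
    using that ij by (auto simp: less_Suc_eq numeral_2_eq_2)
  then show "contains_vpat w pat_21"
    unfolding contains_vpat_def pat_21_def using ij by (intro exI[of _ "[i, j]"]) auto
qed

lemma avoids_vpat_3_21_iff [simp]: "avoids_vpat w pat_3_21 \<longleftrightarrow> \<not> contains_3_21 w"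
  unfolding avoids_vpat_def using contains_vpat_3_21_iff by blast

lemma avoids_vpat_21_iff [simp]: "avoids_vpat w pat_21 \<longleftrightarrow> sorted w"
  unfolding avoids_vpat_def using contains_vpat_21_iff by blast

section \<open>The pattern-avoiding stack\<close>

text \<open>The recursive equation of sc_aux applies to every stack, so as a simp rule it unfolds
  blindly; the three rules below are its case split.\<close>

declare sc_aux.simps(2) [simp del]

lemma sc_aux_Cons_Nil [simp]: "sc_aux P (x # xs) [] = sc_aux P xs [x]"
  by (simp add: sc_aux.simps(2))

lemma sc_aux_push [simp]: "avoids_vpat (x # st) P \<Longrightarrow> sc_aux P (x # xs) st = sc_aux P xs (x # st)"
  by (simp add: sc_aux.simps(2))

lemma sc_aux_pop [simp]:
  "\<not> avoids_vpat (x # y # st) P \<Longrightarrow> sc_aux P (x # xs) (y # st) = y # sc_aux P (x # xs) st"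
  by (simp add: sc_aux.simps(2))

lemma mset_sc_aux: "mset (sc_aux P xs st) = mset xs + mset st"
  by (induction P xs st rule: sc_aux.induct) (auto simp: sc_aux.simps(2) split: list.splits)

lemma set_sc_aux: "set (sc_aux P xs st) = set xs \<union> set st"
  by (metis mset_sc_aux set_mset_mset set_mset_union)

lemma mset_SC [simp]: "mset (SC P \<tau>) = mset \<tau>"
  by (simp add: SC_def mset_sc_aux)

lemma set_SC [simp]: "set (SC P \<tau>) = set \<tau>"
  by (metis mset_SC set_mset_mset)

lemma set_west_s [simp]: "set (west_s w) = set w"
  by (simp add: west_s_eq_SC_pat_21)

lemma sc_aux_append:
  "\<exists>out st'. sc_aux P (xs @ ys) st = out @ sc_aux P ys st' \<and> sc_aux P xs st = out @ st'"
proof (induction P xs st rule: sc_aux.induct)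
  case (1 P st)
  show ?case by (intro exI[of _ "[]"] exI[of _ st]) simp
next
  case (2 P x xs st)
  show ?case
  proof (cases "avoids_vpat (x # st) P")
    case True
    then show ?thesis using "2.IH"(1) by simp
  next
    case False
    show ?thesis
    proof (cases st)
      case Nil
      then show ?thesis using "2.IH"(2) False by simp
    next
      case (Cons y st'')
      then obtain out st' where "sc_aux P (x # xs @ ys) st'' = out @ sc_aux P ys st'"
        "sc_aux P (x # xs) st'' = out @ st'"
        using "2.IH"(3)[OF False] by auto
      then show ?thesis using False Cons by (intro exI[of _ "y # out"] exI[of _ st']) simp
    qed
  qed
qed

lemma subseq_stack_sc_aux: "subseq st (sc_aux P xs st)"
proof (induction P xs st rule: sc_aux.induct)
  case (2 P x xs st)
  show ?case
  proof (cases "avoids_vpat (x # st) P")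
    case True
    then show ?thesis using "2.IH"(1) by (simp add: subseq_Cons')
  next
    case False
    then show ?thesis using "2.IH"(3) by (cases st) simp_all
  qed
qed simp

section \<open>West's stack-sorting map\<close>

lemma sc_aux_21_max_at_bottom:
  "\<forall>y\<in>set xs \<union> set st. y < m \<Longrightarrow> sc_aux pat_21 xs (st @ [m]) = sc_aux pat_21 xs st @ [m]"
proof (induction pat_21 xs st rule: sc_aux.induct)
  case (2 x xs st)
  have sorted_iff: "sorted (x # st @ [m]) \<longleftrightarrow> sorted (x # st)"
    using "2.prems" by (auto simp: sorted_append less_imp_le)
  show ?case
  proof (cases "sorted (x # st)")
    case True
    then show ?thesis
      using "2.hyps"(1) "2.prems" sorted_iff by simp
  next
    case False
    then obtain y st' where "st = y # st'"
      by (cases st) auto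
    then show ?thesis
      using "2.hyps"(3) "2.prems" sorted_iff False by simp
  qed
qed simp

lemma sc_aux_21_pop_smaller:
  "\<forall>y\<in>set st. y < m \<Longrightarrow> sc_aux pat_21 (m # xs) st = st @ sc_aux pat_21 (m # xs) []"
  by (induction st) auto

lemma west_s_max_split:
  assumes "\<forall>y\<in>set L \<union> set R. y < m"
  shows "west_s (L @ m # R) = west_s L @ west_s R @ [m]"
proof -
  obtain out st where run: "sc_aux pat_21 (L @ m # R) [] = out @ sc_aux pat_21 (m # R) st"
    and west_L: "sc_aux pat_21 L [] = out @ st"
    using sc_aux_append by blast
  have "set st \<subseteq> set L"
    using set_sc_aux[of pat_21 L "[]"] west_L by auto
  then have "sc_aux pat_21 (m # R) st = st @ sc_aux pat_21 R ([] @ [m])"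
    using assms by (subst sc_aux_21_pop_smaller) auto
  also have "\<dots> = st @ sc_aux pat_21 R [] @ [m]"
    using assms by (subst sc_aux_21_max_at_bottom) auto
  finally show ?thesis
    using run west_L by (simp add: west_s_eq_SC_pat_21 SC_def)
qed

lemma contains_231_max_split:
  assumes "\<forall>y\<in>set L \<union> set R. y < m"
  shows "contains_231 (L @ m # R) \<longleftrightarrow>
    contains_231 L \<or> contains_231 R \<or> (\<exists>l\<in>set L. \<exists>r\<in>set R. r < l)"
proof
  assume "contains_231 (L @ m # R)"
  then obtain a b c where abc: "subseq [b, c, a] (L @ m # R)" "a < b" "b < c"
    unfolding contains_231_def by blast
  obtain xs ys where split: "[b, c, a] = xs @ ys" "subseq xs L" "subseq ys (m # R)"
    using abc(1) by (rule subseq_appendE)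
  from split(1) have "xs = [] \<or> xs = [b, c, a] \<or> b \<in> set xs \<and> a \<in> set ys"
    by (auto simp: Cons_eq_append_conv)
  then show "contains_231 L \<or> contains_231 R \<or> (\<exists>l\<in>set L. \<exists>r\<in>set R. r < l)"
  proof (elim disjE conjE)
    assume "xs = []"
    then have in_mR: "subseq [b, c, a] (m # R)"
      using split(1,3) by simp
    have "b \<noteq> m"
    proof
      assume "b = m"
      with in_mR have "c \<in> set R"
        using set_subseq by fastforce
      then show False
        using \<open>b = m\<close> abc(3) assms by (meson UnI2 less_asym)
    qed
    then have "subseq [b, c, a] R"
      using in_mR by simp
    then show ?thesis
      using abc unfolding contains_231_def by blast
  next
    assume "xs = [b, c, a]"
    then show ?thesis
      using split(2) abc unfolding contains_231_def by blast
  next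
    assume "b \<in> set xs" "a \<in> set ys"
    then have "b \<in> set L" "a \<in> set (m # R)"
      using set_subseq[OF split(2)] set_subseq[OF split(3)] by auto
    then show ?thesis
      using abc(2) assms by (metis UnI1 less_asym less_trans set_ConsD)
  qed
next
  assume "contains_231 L \<or> contains_231 R \<or> (\<exists>l\<in>set L. \<exists>r\<in>set R. r < l)"
  then show "contains_231 (L @ m # R)"
  proof (elim disjE bexE)
    assume "contains_231 L"
    then show ?thesis
      unfolding contains_231_def by (meson subseq_rev_drop_many)
  next
    assume "contains_231 R"
    then show ?thesis
      unfolding contains_231_def using subseq_drop_many[of _ R "L @ [m]"] by auto
  next
    fix l r assume "l \<in> set L" "r \<in> set R" "r < l"
    then have "subseq ([l] @ [m, r]) (L @ m # R)"
      by (intro list_emb_append_mono) (auto simp: subseq_singleton_left)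
    then show ?thesis
      using assms \<open>l \<in> set L\<close> \<open>r < l\<close> unfolding contains_231_def by auto
  qed
qed

lemma sorted_west_s_iff:
  fixes \<pi> :: "nat list"
  assumes "distinct \<pi>"
  shows "sorted (west_s \<pi>) \<longleftrightarrow> \<not> contains_231 \<pi>"
  using assms
proof (induction "length \<pi>" arbitrary: \<pi> rule: less_induct)
  case less
  show ?case
  proof (cases "\<pi> = []")
    case True
    then show ?thesis
      by (simp add: west_s_eq_SC_pat_21 SC_def contains_231_def)
  next
    case False
    define m where "m = Max (set \<pi>)"
    have "m \<in> set \<pi>"
      using False by (simp add: m_def)
    then obtain L R where \<pi>: "\<pi> = L @ m # R"
      by (meson split_list)
    have less_m: "\<forall>y\<in>set L \<union> set R. y < m"
    proof
      fix y assume y: "y \<in> set L \<union> set R"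
      then have "y \<in> set \<pi>"
        by (simp add: \<pi>)
      then have "y \<le> m"
        unfolding m_def by simp
      moreover have "y \<noteq> m"
        using y less.prems by (auto simp: \<pi>)
      ultimately show "y < m"
        by simp
    qed
    have "sorted (west_s \<pi>) \<longleftrightarrow>
        sorted (west_s L) \<and> sorted (west_s R) \<and> (\<forall>l\<in>set L. \<forall>r\<in>set R. l \<le> r)"
      using less_m by (auto simp: \<pi> west_s_max_split sorted_append less_imp_le)
    also have "\<dots> \<longleftrightarrow> \<not> contains_231 L \<and> \<not> contains_231 R \<and> \<not> (\<exists>l\<in>set L. \<exists>r\<in>set R. r < l)"
      using less.hyps less.prems by (simp add: \<pi> not_less)
    also have "\<dots> \<longleftrightarrow> \<not> contains_231 \<pi>"
      using contains_231_max_split[OF less_m] by (simp add: \<pi>)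
    finally show ?thesis .
  qed
qed

section \<open>The stack map for 3\underline{21}\<close>

lemma contains_3_21_infix: "contains_3_21 w \<Longrightarrow> contains_3_21 (u @ w @ v)"
proof -
  assume "contains_3_21 w"
  then obtain u' a v' b c z where "w = u' @ a # v' @ b # c # z" "c < b" "b < a"
    unfolding contains_3_21_def by blast
  then show ?thesis
    unfolding contains_3_21_def
    by (intro exI[of _ "u @ u'"] exI[of _ a] exI[of _ v'] exI[of _ b] exI[of _ c] exI[of _ "z @ v"]) simp
qed

lemma contains_3_21_top_descent:
  assumes "contains_3_21 (x # y # s)" "\<not> contains_3_21 (y # s)" "\<not> contains_3_21 (x # s)"
  shows "\<exists>d s'. s = d # s' \<and> d < y \<and> y < x"
proof -
  obtain u a v b c z where occ: "x # y # s = u @ a # v @ b # c # z" "c < b" "b < a"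
    using assms(1) unfolding contains_3_21_def by blast
  have "u = []"
  proof (rule ccontr)
    assume "u \<noteq> []"
    then have "y # s = tl u @ a # v @ b # c # z"
      using occ(1) by (cases u) auto
    then show False
      using assms(2) occ unfolding contains_3_21_def by blast
  qed
  have "v = []"
  proof (rule ccontr)
    assume "v \<noteq> []"
    then have "x # s = [] @ x # tl v @ b # c # z" "a = x"
      using occ(1) \<open>u = []\<close> by (cases v; auto)+
    then show False
      using assms(3) occ unfolding contains_3_21_def by blast
  qed
  then show ?thesis
    using occ \<open>u = []\<close> by auto
qed

lemma sc_aux_3_21_blocked:
  assumes "\<not> contains_3_21 st" and "contains_3_21 (x # st)"
  shows "\<exists>pre p d st'. st = pre @ p # d # st' \<and> d < p \<and> p < x \<and> \<not> contains_3_21 (x # d # st') \<and>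
    sc_aux pat_3_21 (x # xs) st = pre @ p # sc_aux pat_3_21 (x # xs) (d # st')"
  using assms
proof (induction st)
  case Nil
  then show ?case
    by (auto simp: contains_3_21_def Cons_eq_append_conv)
next
  case (Cons y st)
  have pop: "sc_aux pat_3_21 (x # xs) (y # st) = y # sc_aux pat_3_21 (x # xs) st"
    using Cons.prems(2) by simp
  have "\<not> contains_3_21 st"
    using Cons.prems(1) contains_3_21_infix[of st "[y]" "[]"] by auto
  show ?case
  proof (cases "contains_3_21 (x # st)")
    case False
    then obtain d st' where "st = d # st'" "d < y" "y < x"
      using contains_3_21_top_descent Cons.prems by blast
    then show ?thesis
      using pop False by (intro exI[of _ "[]"] exI[of _ y] exI[of _ d] exI[of _ st']) simp
  next
    case True
    then obtain pre p d st' where "st = pre @ p # d # st'" "d < p" "p < x"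
        "\<not> contains_3_21 (x # d # st')"
        "sc_aux pat_3_21 (x # xs) st = pre @ p # sc_aux pat_3_21 (x # xs) (d # st')"
      using Cons.IH \<open>\<not> contains_3_21 st\<close> by blast
    then show ?thesis
      using pop by (intro exI[of _ "y # pre"] exI[of _ p] exI[of _ d] exI[of _ st']) simp
  qed
qed

lemma sc_aux_3_21_push_all:
  "\<not> contains_3_21 (rev \<tau> @ st) \<Longrightarrow> sc_aux pat_3_21 \<tau> st = rev \<tau> @ st"
proof (induction \<tau> arbitrary: st)
  case (Cons x \<tau>)
  have "\<not> contains_3_21 (x # st)"
    using Cons.prems contains_3_21_infix[of "x # st" "rev \<tau>" "[]"] by auto
  then show ?case
    using Cons by simp
qed simp

lemma sc_aux_3_21_contains_231:
  assumes "\<not> contains_3_21 st" and "contains_3_21 (rev \<tau> @ st)"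
  shows "contains_231 (sc_aux pat_3_21 \<tau> st)"
  using assms
proof (induction \<tau> arbitrary: st)
  case Nil
  then show ?case by simp
next
  case (Cons x \<tau>)
  show ?case
  proof (cases "contains_3_21 (x # st)")
    case False
    then show ?thesis
      using Cons.IH[of "x # st"] Cons.prems(2) by simp
  next
    case True
    then obtain pre p d st' where "d < p" "p < x" "\<not> contains_3_21 (x # d # st')"
        and "sc_aux pat_3_21 (x # \<tau>) st = pre @ p # sc_aux pat_3_21 (x # \<tau>) (d # st')"
      using sc_aux_3_21_blocked[OF Cons.prems(1) True] by blast
    then have run: "sc_aux pat_3_21 (x # \<tau>) st = pre @ p # sc_aux pat_3_21 \<tau> (x # d # st')"
      by simp
    have "subseq [x, d] (x # d # st')"
      by simp
    then have "subseq [x, d] (sc_aux pat_3_21 \<tau> (x # d # st'))"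
      using subseq_order.order_trans subseq_stack_sc_aux by blast
    then have "subseq [p, x, d] (sc_aux pat_3_21 (x # \<tau>) st)"
      unfolding run using subseq_drop_many[of "[p, x, d]"] by simp
    then show ?thesis
      using \<open>d < p\<close> \<open>p < x\<close> unfolding contains_231_def by blast
  qed
qed

lemma contains_123_if_contains_3_21_rev: "contains_3_21 (rev \<tau>) \<Longrightarrow> contains_123 \<tau>"
proof -
  assume "contains_3_21 (rev \<tau>)"
  then obtain u a v b c z where occ: "rev \<tau> = u @ a # v @ b # c # z" "c < b" "b < a"
    unfolding contains_3_21_def by blast
  then have "\<tau> = rev z @ c # b # rev v @ a # rev u"
    by (metis append.assoc append_Cons append_Nil rev.simps(2) rev_append rev_rev_ident)
  then have "subseq [c, b, a] \<tau>"
    by (auto intro!: subseq_drop_many simp: subseq_singleton_left)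
  then show "contains_123 \<tau>"
    using occ unfolding contains_123_def by blast
qed

lemma contains_3_21_rev_if_123_occurrence:
  "subseq [a, b, c] \<tau> \<Longrightarrow> a < b \<Longrightarrow> b < c \<Longrightarrow> \<not> contains_132 \<tau> \<Longrightarrow> contains_3_21 (rev \<tau>)"
proof (induction \<tau> arbitrary: a)
  case Nil
  then show ?case by simp
next
  case (Cons y t)
  have no132: "\<not> contains_132 t"
    using Cons.prems(4) unfolding contains_132_def by (meson list_emb_Cons)
  have IH: "contains_3_21 (rev (y # t))" if "subseq [a', b, c] t" "a' < b" for a'
    using Cons.IH[OF that Cons.prems(3) no132] contains_3_21_infix[of "rev t" "[]" "[y]"] by simp
  show ?case
  proof (cases "subseq [a, b, c] t")
    case True
    then show ?thesis
      using IH Cons.prems(2) by blast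
  next
    case False
    then have "y = a" "subseq [b, c] t"
      using Cons.prems(1) by (auto split: if_splits)
    then obtain z t' where t: "t = z # t'"
      by (cases t) auto
    txt \<open>The entry z right after a starts a 123 closer to the front, completes
      \underline{12}3 with a, or forms the 132 a z b.\<close>
    consider "z \<le> a" | "a < z" "z < c" | "c \<le> z"
      by fastforce
    then show ?thesis
    proof cases
      case 1
      then have "subseq [z, b, c] t"
        using \<open>subseq [b, c] t\<close> Cons.prems(2) by (auto simp: t)
      then show ?thesis
        using IH 1 Cons.prems(2) by (meson le_less_trans)
    next
      case 2
      have "subseq [c] t'"
        using \<open>subseq [b, c] t\<close> by (auto simp: t split: if_splits dest: subseq_Cons')
      then obtain v w where "rev t' = v @ c # w"
        by (metis in_set_conv_decomp set_rev subseq_singleton_left)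
      then have "rev (y # t) = v @ c # w @ z # a # []"
        using \<open>y = a\<close> by (simp add: t)
      then show ?thesis
        using 2 unfolding contains_3_21_def by blast
    next
      case 3
      then have "subseq [b, c] t'"
        using \<open>subseq [b, c] t\<close> Cons.prems(3) by (auto simp: t)
      then have "subseq [a, z, b] (y # t)"
        using \<open>y = a\<close> by (auto simp: t dest: set_subseq simp: subseq_singleton_left)
      then have "contains_132 (y # t)"
        using 3 Cons.prems(2,3) unfolding contains_132_def by (meson less_le_trans)
      then show ?thesis
        using Cons.prems(4) by contradiction
    qed
  qed
qed

lemma contains_231_rev_iff: "contains_231 (rev w) \<longleftrightarrow> contains_132 w"
proof -
  have "subseq [b, c, a] (rev w) \<longleftrightarrow> subseq [a, c, b] w" for a b c
    using subseq_rev_iff[of "[a, c, b]" w] by simp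
  then show ?thesis
    unfolding contains_231_def contains_132_def by simp
qed

lemma sorted_west_s_SC_3_21_iff:
  fixes \<tau> :: "nat list"
  assumes "distinct \<tau>"
  shows "sorted (west_s (SC pat_3_21 \<tau>)) \<longleftrightarrow> \<not> contains_123 \<tau> \<and> \<not> contains_132 \<tau>"
proof (cases "contains_3_21 (rev \<tau>)")
  case True
  then have "contains_231 (SC pat_3_21 \<tau>)"
    using sc_aux_3_21_contains_231[of "[]" \<tau>] by (simp add: SC_def contains_3_21_def)
  moreover have "distinct (SC pat_3_21 \<tau>)"
    using assms mset_eq_imp_distinct_iff[OF mset_SC] by blast
  ultimately show ?thesis
    using True sorted_west_s_iff contains_123_if_contains_3_21_rev by blast
next
  case False
  then have "SC pat_3_21 \<tau> = rev \<tau>"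
    using sc_aux_3_21_push_all[of \<tau> "[]"] by (simp add: SC_def)
  then have "sorted (west_s (SC pat_3_21 \<tau>)) \<longleftrightarrow> \<not> contains_132 \<tau>"
    using assms sorted_west_s_iff[of "rev \<tau>"] contains_231_rev_iff by simp
  then show ?thesis
    using False contains_3_21_rev_if_123_occurrence unfolding contains_123_def by blast
qed

section \<open>Permutations avoiding 123 and 132\<close>

lemma contains_123_Cons:
  "contains_123 (x # t) \<longleftrightarrow> contains_123 t \<or> (\<exists>b c. subseq [b, c] t \<and> x < b \<and> b < c)"
  unfolding contains_123_def subseq_Cons_Cons_iff by blast

lemma contains_132_Cons:
  "contains_132 (x # t) \<longleftrightarrow> contains_132 t \<or> (\<exists>b c. subseq [c, b] t \<and> x < b \<and> b < c)"
  unfolding contains_132_def subseq_Cons_Cons_iff by blast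

definition top_two :: "'a::linorder set \<Rightarrow> 'a set" where
  "top_two A = {x\<in>A. \<not> (\<exists>b\<in>A. \<exists>c\<in>A. x < b \<and> b < c)}"

lemma card_top_two:
  fixes A :: "'a::linorder set"
  assumes "finite A" "2 \<le> card A"
  shows "card (top_two A) = 2"
proof -
  define M where "M = Max A"
  define M' where "M' = Max (A - {M})"
  have "A \<noteq> {}" "A - {M} \<noteq> {}"
    using assms by (auto simp: M_def card_le_Suc_iff numeral_2_eq_2)
  have M: "M \<in> A" "\<forall>y\<in>A. y \<le> M"
    unfolding M_def using assms(1) \<open>A \<noteq> {}\<close> by simp_all
  have M': "M' \<in> A - {M}" "\<forall>y\<in>A - {M}. y \<le> M'"
    unfolding M'_def using assms(1) \<open>A - {M} \<noteq> {}\<close> by (intro Max_in ballI Max_ge; simp)+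
  then have "M' < M"
    using M by (simp add: order.not_eq_order_implies_strict)
  have "top_two A = {M', M}"
  proof (intro equalityI subsetI)
    fix x assume x: "x \<in> top_two A"
    show "x \<in> {M', M}"
    proof (rule ccontr)
      assume "x \<notin> {M', M}"
      then have "x \<in> A - {M}" "x \<noteq> M'"
        using x by (simp_all add: top_two_def)
      then have "x < M'"
        using M'(2) by (simp add: order.not_eq_order_implies_strict)
      then show False
        using x M M' \<open>M' < M\<close> unfolding top_two_def by blast
    qed
  next
    fix x assume "x \<in> {M', M}"
    then show "x \<in> top_two A"
      using M M' by (auto simp: top_two_def not_less)
  qed
  then show ?thesis
    using \<open>M' < M\<close> by simp
qed

lemma avoids_123_132_Cons:
  assumes "x # t \<in> permutations_of_set A"
  shows "\<not> contains_123 (x # t) \<and> \<not> contains_132 (x # t) \<longleftrightarrow>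
    \<not> contains_123 t \<and> \<not> contains_132 t \<and> x \<in> top_two A"
proof -
  have "set (x # t) = A" "distinct (x # t)"
    using permutations_of_setD[OF assms] by simp_all
  then have set_t: "set t = A - {x}" and "x \<in> A"
    by force+
  have "(\<exists>b c. subseq [b, c] t \<and> x < b \<and> b < c) \<or> (\<exists>b c. subseq [c, b] t \<and> x < b \<and> b < c) \<longleftrightarrow>
      (\<exists>b\<in>A. \<exists>c\<in>A. x < b \<and> b < c)"
  proof
    assume "(\<exists>b c. subseq [b, c] t \<and> x < b \<and> b < c) \<or> (\<exists>b c. subseq [c, b] t \<and> x < b \<and> b < c)"
    then obtain b c where "subseq [b, c] t \<or> subseq [c, b] t" "x < b" "b < c"
      by blast
    then have "b \<in> set t" "c \<in> set t"
      using set_subseq by fastforce+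
    then show "\<exists>b\<in>A. \<exists>c\<in>A. x < b \<and> b < c"
      using set_t \<open>x < b\<close> \<open>b < c\<close> by blast
  next
    assume "\<exists>b\<in>A. \<exists>c\<in>A. x < b \<and> b < c"
    then obtain b c where "b \<in> A" "c \<in> A" "x < b" "b < c"
      by blast
    moreover have "x < c"
      using \<open>x < b\<close> \<open>b < c\<close> by (rule less_trans)
    ultimately have "b \<in> set t" "c \<in> set t"
      using set_t by auto
    then show "(\<exists>b c. subseq [b, c] t \<and> x < b \<and> b < c) \<or> (\<exists>b c. subseq [c, b] t \<and> x < b \<and> b < c)"
      using subseq_pair_cases[of b t c] \<open>x < b\<close> \<open>b < c\<close> by (blast dest: less_imp_neq)
  qed
  then show ?thesis
    unfolding contains_123_Cons contains_132_Cons top_two_def using \<open>x \<in> A\<close> by blast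
qed

definition perms_avoiding_123_132 :: "'a::linorder set \<Rightarrow> 'a list set" where
  "perms_avoiding_123_132 A = {\<tau> \<in> permutations_of_set A. \<not> contains_123 \<tau> \<and> \<not> contains_132 \<tau>}"

lemma perms_avoiding_123_132_empty [simp]: "perms_avoiding_123_132 {} = {[]}"
  by (auto simp: perms_avoiding_123_132_def contains_123_def contains_132_def)

lemma Cons_in_permutations_of_set_iff:
  "x # t \<in> permutations_of_set A \<longleftrightarrow> x \<in> A \<and> t \<in> permutations_of_set (A - {x})"
  unfolding permutations_of_set_def by auto

lemma perms_avoiding_123_132_nonempty:
  assumes "A \<noteq> {}"
  shows "perms_avoiding_123_132 A = (\<Union>x\<in>top_two A. (#) x ` perms_avoiding_123_132 (A - {x}))"
proof (intro set_eqI iffI)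
  fix \<tau> assume "\<tau> \<in> perms_avoiding_123_132 A"
  then have \<tau>: "\<tau> \<in> permutations_of_set A" "\<not> contains_123 \<tau> \<and> \<not> contains_132 \<tau>"
    unfolding perms_avoiding_123_132_def by blast+
  moreover have "\<tau> \<noteq> []"
    using \<tau>(1) assms permutations_of_setD(1) by fastforce
  then obtain x t where x_t: "\<tau> = x # t"
    by (cases \<tau>) auto
  have "t \<in> permutations_of_set (A - {x})"
    using \<tau>(1) by (simp add: x_t Cons_in_permutations_of_set_iff)
  moreover have "\<not> contains_123 t \<and> \<not> contains_132 t" "x \<in> top_two A"
    using avoids_123_132_Cons[of x t A] \<tau> by (simp_all add: x_t)
  ultimately show "\<tau> \<in> (\<Union>x\<in>top_two A. (#) x ` perms_avoiding_123_132 (A - {x}))"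
    unfolding perms_avoiding_123_132_def x_t by blast
next
  fix \<tau> assume "\<tau> \<in> (\<Union>x\<in>top_two A. (#) x ` perms_avoiding_123_132 (A - {x}))"
  then obtain x t where "\<tau> = x # t" "x \<in> top_two A" "t \<in> perms_avoiding_123_132 (A - {x})"
    by blast
  moreover from this have "x # t \<in> permutations_of_set A"
    unfolding perms_avoiding_123_132_def top_two_def Cons_in_permutations_of_set_iff by blast
  ultimately show "\<tau> \<in> perms_avoiding_123_132 A"
    using avoids_123_132_Cons[of x t A] unfolding perms_avoiding_123_132_def by simp
qed

lemma card_perms_avoiding_123_132:
  assumes "finite A" "A \<noteq> {}"
  shows "card (perms_avoiding_123_132 A) = 2 ^ (card A - 1)"
  using assms
proof (induction "card A" arbitrary: A rule: less_induct)
  case less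
  have "card (perms_avoiding_123_132 A) =
      (\<Sum>x\<in>top_two A. card ((#) x ` perms_avoiding_123_132 (A - {x})))"
    unfolding perms_avoiding_123_132_nonempty[OF less.prems(2)] using less.prems(1)
    by (intro card_UN_disjoint) (auto simp: top_two_def perms_avoiding_123_132_def)
  also have "\<dots> = (\<Sum>x\<in>top_two A. card (perms_avoiding_123_132 (A - {x})))"
    by (simp add: card_image)
  also have "\<dots> = 2 ^ (card A - 1)"
  proof (cases "card A = 1")
    case True
    then obtain a where "A = {a}"
      using card_1_singletonE by blast
    then show ?thesis
      by (simp add: top_two_def)
  next
    case False
    then have "2 \<le> card A"
      using less.prems card_gt_0_iff[of A] by linarith
    have "card (perms_avoiding_123_132 (A - {x})) = 2 ^ (card A - 2)" if "x \<in> top_two A" for x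
    proof -
      have card_x: "card (A - {x}) = card A - 1"
        using that less.prems(1) by (simp add: top_two_def)
      then have "card (A - {x}) \<noteq> 0"
        using \<open>2 \<le> card A\<close> by linarith
      then have "A - {x} \<noteq> {}"
        by (metis card.empty)
      then show ?thesis
        using less.hyps[of "A - {x}"] less.prems(1) card_x \<open>2 \<le> card A\<close> by simp
    qed
    then have "(\<Sum>x\<in>top_two A. card (perms_avoiding_123_132 (A - {x}))) = 2 * 2 ^ (card A - 2)"
      using card_top_two[OF less.prems(1) \<open>2 \<le> card A\<close>] by simp
    also have "\<dots> = 2 ^ (card A - 1)"
      using \<open>2 \<le> card A\<close> by (metis Suc_diff_Suc Suc_le_lessD numeral_2_eq_2 power_Suc diff_Suc_1 One_nat_def)
    finally show ?thesis .
  qed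
  finally show ?case .
qed

lemma upt_eq_iff_sorted:
  assumes "\<tau> \<in> permutations_of_set {1..n}" "mset \<sigma> = mset \<tau>"
  shows "\<sigma> = [1..<n + 1] \<longleftrightarrow> sorted \<sigma>"
proof -
  have "mset \<tau> = mset [1..<n + 1]"
    using assms(1) by (metis atLeastLessThanSuc_atLeastAtMost distinct_upt permutations_of_setD
        set_eq_iff_mset_eq_distinct set_upt Suc_eq_plus1)
  then show ?thesis
    using assms(2) by (metis properties_for_sort sorted_sort_id sorted_upt)
qed

lemma Sort_n_3_21_eq: "Sort_n n pat_3_21 = perms_avoiding_123_132 {1..n}"
proof -
  have "west_s (SC pat_3_21 \<tau>) = [1..<n + 1] \<longleftrightarrow> \<not> contains_123 \<tau> \<and> \<not> contains_132 \<tau>"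
    if "\<tau> \<in> permutations_of_set {1..n}" for \<tau>
  proof -
    have "mset (west_s (SC pat_3_21 \<tau>)) = mset \<tau>"
      by (simp add: west_s_eq_SC_pat_21)
    then show ?thesis
      using upt_eq_iff_sorted[OF that] sorted_west_s_SC_3_21_iff permutations_of_setD(2)[OF that]
      by simp
  qed
  then show ?thesis
    unfolding Sort_n_def perms_avoiding_123_132_def by blast
qed

theorem mainTheorem8:
  fixes n :: nat
  assumes "n \<ge> 1"
  shows "card (Sort_n n pat_3_21) = 2 ^ (n - 1)"
  using card_perms_avoiding_123_132[of "{1..n}"] assms by (simp add: Sort_n_3_21_eq)

end
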